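(* Let $q\neq-1$ be real and $n\ge0$. Then $$T_n(x,s,q)=\sum_{k=0}^{\lfloor n/2\rfloor}q^{\binom{n-2k}{2}}\begin{bmatrix} n\\ 2k\end{bmatrix}x^{n-2k}\prod_{j=0}^{k-1}(x^2+q^{2j+1}s)$$ and $$U_n(x,s,q)=\sum_{k=0}^{\lfloor n/2\rfloor}q^{\binom{n-2k}{2}}\begin{bmatrix} n+1\\ 2k+1\end{bmatrix}x^{n-2k}\prod_{j=0}^{k-1}(x^2+q^{2j+1}s).$$
   Context: $T_0=1$, $T_1=x$, $T_n(x,s,q)=(1+q^{n-1})x\,T_{n-1}(x,s,q)+q^{n-1}s\,T_{n-2}(x,s,q)$ for $n\ge2$; $U_{-1}=0$, $U_0=1$, $U_n(x,s,q)=(1+q^{n})x\,U_{n-1}(x,s,q)+q^{n-1}s\,U_{n-2}(x,s,q)$ for $n\ge1$. Notation: $[m]=1+q+\cdots+q^{m-1}$, $[m]!=[1]\cdots[m]$, $\begin{bmatrix} m\\ j\end{bmatrix}=\frac{[m]!}{[j]![m-j]!}$; $\binom{0}{2}=\binom12=0$; empty products equal $1$. *)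

theory Defs
  imports Complex_Main
begin

definition qint :: "real \<Rightarrow> nat \<Rightarrow> real" where
  "qint q m = (\<Sum>i<m. q ^ i)"

definition qfact :: "real \<Rightarrow> nat \<Rightarrow> real" where
  "qfact q m = (\<Prod>i\<in>{1..m}. qint q i)"

definition qbinom :: "real \<Rightarrow> nat \<Rightarrow> nat \<Rightarrow> real" where
  "qbinom q m j = qfact q m / (qfact q j * qfact q (m - j))"

fun T :: "nat \<Rightarrow> real \<Rightarrow> real \<Rightarrow> real \<Rightarrow> real" where
  "T 0 x s q = 1"
| "T (Suc 0) x s q = x"
| "T (Suc (Suc n)) x s q =
     (1 + q ^ (Suc n)) * x * T (Suc n) x s q + q ^ (Suc n) * s * T n x s q"

text \<open>U_n with U_{-1} = 0, so U_1 = (1+q) x.\<close>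
fun U :: "nat \<Rightarrow> real \<Rightarrow> real \<Rightarrow> real \<Rightarrow> real" where
  "U 0 x s q = 1"
| "U (Suc 0) x s q = (1 + q) * x"
| "U (Suc (Suc n)) x s q =
     (1 + q ^ (Suc (Suc n))) * x * U (Suc n) x s q + q ^ (Suc n) * s * U n x s q"

end

theory Submission
  imports Defs
begin

text \<open>
  Write the right-hand sides as expansions \<open>\<Sum>k c n k x^(n-2k) P k\<close> in the polynomials
  \<open>P k = \<Prod>j<k. x^2 + q^(2j+1) s\<close> (shifted_prod). Since \<open>x^2 P k = P (k+1) - q^(2k+1) s P k\<close>, such an
  expansion satisfies the three-term recurrence of T (resp. U) as soon as its coefficients satisfy
  a three-term recurrence of their own, and the initial values agree. For the coefficients
  \<open>q^C(n-2k,2) [n+d, 2k+d]\<close> (\<open>d = 0\<close> for T, \<open>d = 1\<close> for U) that recurrence becomes, after clearing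
  the q-factorials, a polynomial identity between q-integers, which follows from
  \<open>[a+b] = [a] + q^a [b]\<close> and \<open>(1-q)[m] = 1-q^m\<close>. The hypothesis \<open>q \<noteq> -1\<close> is exactly what keeps all
  q-integers nonzero, so that the q-binomials are genuine quotients.
\<close>

lemma qint_0 [simp]: "qint q 0 = 0"
  by (simp add: qint_def)

lemma qint_Suc_0 [simp]: "qint q (Suc 0) = 1"
  by (simp add: qint_def)

lemma qint_Suc: "qint q (Suc m) = qint q m + q ^ m"
  by (simp add: qint_def)

lemma qint_add: "qint q (a + b) = qint q a + q ^ a * qint q b"
proof (induction b)
  case (Suc b)
  then show ?case
    by (simp add: qint_Suc algebra_simps power_add)
qed simp

lemma qint_Suc_left: "qint q (Suc m) = 1 + q * qint q m"
  using qint_add[of q 1 m] by simp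

lemma one_minus_mult_qint: "(1 - q) * qint q m = 1 - q ^ m"
proof (induction m)
  case (Suc m)
  have "(1 - q) * qint q (Suc m) = (1 - q) * qint q m + (1 - q) * q ^ m"
    by (simp add: qint_Suc algebra_simps)
  with Suc show ?case
    by (simp add: algebra_simps)
qed simp

lemma qint_nonzero:
  assumes "q \<noteq> -1" and "m > 0"
  shows "qint q m \<noteq> 0"
proof
  assume zero: "qint q m = 0"
  show False
  proof (cases "q = 1")
    case True
    with zero assms(2) show False
      by (simp add: qint_def)
  next
    case False
    from zero have "q ^ m = 1"
      using one_minus_mult_qint[of q m] by simp
    then have "\<bar>q\<bar> ^ m = 1"
      by (metis power_abs abs_one)
    then have "\<bar>q\<bar> = 1"
      using assms(2) power_eq_imp_eq_base[of "\<bar>q\<bar>" m 1] by simp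
    with False assms(1) show False
      by (auto simp: abs_if split: if_splits)
  qed
qed

lemma qfact_Suc: "qfact q (Suc m) = qfact q m * qint q (Suc m)"
  by (simp add: qfact_def prod.cl_ivl_Suc)

lemma qfact_add_2: "qfact q (k + 2) = qfact q k * qint q (k + 1) * qint q (k + 2)"
  using qfact_Suc[of q k] qfact_Suc[of q "Suc k"] by (simp add: eval_nat_numeral)

lemma qfact_nonzero: "q \<noteq> -1 \<Longrightarrow> qfact q m \<noteq> 0"
  by (induction m) (simp_all add: qfact_def qfact_Suc qint_nonzero)

lemma qbinom_0: "q \<noteq> -1 \<Longrightarrow> qbinom q m 0 = 1"
  using qfact_nonzero[of q m] by (simp add: qbinom_def qfact_def)

lemma qbinom_self: "q \<noteq> -1 \<Longrightarrow> qbinom q m m = 1"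
  using qfact_nonzero[of q m] by (simp add: qbinom_def qfact_def)

lemma qbinom_Suc_self: "q \<noteq> -1 \<Longrightarrow> qbinom q (Suc m) m = qint q (Suc m)"
  using qfact_nonzero[of q m] by (simp add: qbinom_def qfact_Suc Suc_diff_le qfact_def)

lemma qbinom_1: "q \<noteq> -1 \<Longrightarrow> qbinom q (Suc m) 1 = qint q (Suc m)"
  using qfact_nonzero[of q m] by (simp add: qbinom_def qfact_Suc qfact_def)

lemma qint_recurrence: "q ^ a * qint q (a + 2) = (1 + q ^ (a + 1)) * qint q (a + 1) - qint q a"
proof -
  have "qint q (a + 2) = 1 + q * qint q (a + 1)" and "qint q (a + 1) = qint q a + q ^ a"
    using qint_Suc_left[of q "a + 1"] qint_Suc[of q a] by simp_all
  then show ?thesis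
    by (simp add: algebra_simps)
qed

lemma qint_three_term:
  "q ^ (m + 1) * qint q (m + l + 2) * qint q (m + l + 3) =
     (1 + q ^ (m + l + 2)) * qint q (m + l + 2) * qint q (m + 2)
     + q ^ (2 * m + 3) * qint q (l + 1) * qint q l - qint q (m + 1) * qint q (m + 2)"
proof -
  define u v A B where "u = qint q m" and "v = qint q l" and "A = q ^ m" and "B = q ^ l"
  have expand:
    "qint q (m + l + 2) = u + A * (v + B * (1 + q))"
    "qint q (m + l + 3) = u + A * (v + B * (1 + q + q^2))"
    "qint q (m + 2) = u + A * (1 + q)" "qint q (m + 1) = u + A" "qint q (l + 1) = v + B"
    unfolding u_def v_def A_def B_def
    by (simp_all only: add.assoc qint_add) (simp_all add: qint_def eval_nat_numeral)
  have powers: "q ^ (m + 1) = A * q" "q ^ (m + l + 2) = A * B * q^2" "q ^ (2 * m + 3) = A^2 * q^3"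
    unfolding A_def B_def by (simp_all only: power_add power_one_right power_mult mult.commute)
  \<comment> \<open>The identity holds in the polynomial ring in u, v, A, B, q modulo the two relations below.\<close>
  have "(1 - q) * u = 1 - A" "(1 - q) * v = 1 - B"
    unfolding u_def v_def A_def B_def by (simp_all only: one_minus_mult_qint)
  then show ?thesis
    unfolding expand powers u_def[symmetric] v_def[symmetric] by algebra
qed

lemma Suc_choose_two: "Suc n choose 2 = (n choose 2) + n"
  by (simp add: numeral_2_eq_2)

lemma qbinom_three_term:
  assumes "q \<noteq> -1"
  shows "q ^ ((m + 2) choose 2) * qbinom q (m + p + 4) (p + 2) =
    (1 + q ^ (m + p + 3)) * q ^ ((m + 1) choose 2) * qbinom q (m + p + 3) (p + 2)
    + q ^ (m + 2) * q ^ ((m + 2) choose 2) * qbinom q (m + p + 2) p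
    - q ^ m * q ^ (m choose 2) * qbinom q (m + p + 2) (p + 2)"
proof -
  define I where "I = qint q"
  define F a b Z where "F = qfact q (m + p + 2)" and "a = qfact q p" and "b = qfact q m"
    and "Z = q ^ (m choose 2)"
  have I_nonzero: "I k \<noteq> 0" if "k > 0" for k
    using qint_nonzero[OF assms that] by (simp add: I_def)
  have fact_nonzero: "F \<noteq> 0" "a \<noteq> 0" "b \<noteq> 0"
    using qfact_nonzero[OF assms] by (simp_all add: F_def a_def b_def)
  have binoms:
    "qbinom q (m + p + 4) (p + 2) = F * I (m + p + 3) * I (m + p + 4) / (a * I (p + 1) * I (p + 2) * (b * I (m + 1) * I (m + 2)))"
    "qbinom q (m + p + 3) (p + 2) = F * I (m + p + 3) / (a * I (p + 1) * I (p + 2) * (b * I (m + 1)))"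
    "qbinom q (m + p + 2) p = F / (a * (b * I (m + 1) * I (m + 2)))"
    "qbinom q (m + p + 2) (p + 2) = F / (a * I (p + 1) * I (p + 2) * b)"
    using qfact_Suc[of q "m + p + 2"] qfact_add_2[of q "m + p + 2"] qfact_add_2[of q p]
      qfact_Suc[of q m] qfact_add_2[of q m]
    by (simp_all add: qbinom_def I_def F_def a_def b_def add.commute add.left_commute eval_nat_numeral)
  have power_choose_1: "q ^ ((m + 1) choose 2) = Z * q ^ m"
    using Suc_choose_two[of m] by (simp add: Z_def power_add)
  have power_choose_2: "q ^ ((m + 2) choose 2) = Z * q ^ m * q ^ m * q"
    using Suc_choose_two[of m] Suc_choose_two[of "Suc m"] by (simp add: Z_def power_add)
  have power_1: "q ^ (2 * m + 3) = q ^ m * q ^ m * q ^ 3"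
    by (simp only: mult_2 power_add)
  have power_2: "q ^ (m + 2) = q ^ m * q^2"
    by (rule power_add)
  have qint_identity: "q ^ m * q * I (m + p + 3) * I (m + p + 4) =
      (1 + q ^ (m + p + 3)) * I (m + p + 3) * I (m + 2) + q ^ m * q ^ m * q ^ 3 * I (p + 2) * I (p + 1)
      - I (m + 1) * I (m + 2)"
    using qint_three_term[of q m "p + 1"] unfolding power_1 by (simp add: I_def eval_nat_numeral mult.commute)
  define K where "K = Z * q ^ m * F / (a * b * I (p + 1) * I (p + 2) * I (m + 1) * I (m + 2))"
  have lhs: "q ^ ((m + 2) choose 2) * qbinom q (m + p + 4) (p + 2) = K * (q ^ m * q * I (m + p + 3) * I (m + p + 4))"
    unfolding binoms power_choose_2 K_def using I_nonzero fact_nonzero by (simp add: field_simps)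
  have rhs_1: "(1 + q ^ (m + p + 3)) * q ^ ((m + 1) choose 2) * qbinom q (m + p + 3) (p + 2) =
      K * ((1 + q ^ (m + p + 3)) * I (m + p + 3) * I (m + 2))"
    unfolding binoms power_choose_1 K_def using I_nonzero fact_nonzero by (simp add: field_simps)
  have rhs_2: "q ^ (m + 2) * q ^ ((m + 2) choose 2) * qbinom q (m + p + 2) p =
      K * (q ^ m * q ^ m * q ^ 3 * I (p + 2) * I (p + 1))"
    unfolding binoms power_choose_2 power_2 K_def using I_nonzero fact_nonzero
    by (simp add: field_simps power2_eq_square power3_eq_cube)
  have rhs_3: "q ^ m * q ^ (m choose 2) * qbinom q (m + p + 2) (p + 2) = K * (I (m + 1) * I (m + 2))"
    unfolding binoms K_def Z_def[symmetric] using I_nonzero fact_nonzero by (simp add: field_simps)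
  show ?thesis
    unfolding lhs rhs_1 rhs_2 rhs_3 qint_identity by (simp add: algebra_simps)
qed

definition shifted_prod :: "real \<Rightarrow> real \<Rightarrow> real \<Rightarrow> nat \<Rightarrow> real" where
  "shifted_prod x s q k = (\<Prod>j<k. x\<^sup>2 + q ^ (2 * j + 1) * s)"

definition basis_expansion :: "(nat \<Rightarrow> nat \<Rightarrow> real) \<Rightarrow> real \<Rightarrow> real \<Rightarrow> real \<Rightarrow> nat \<Rightarrow> real" where
  "basis_expansion c x s q n = (\<Sum>k\<le>n. c n k * x ^ (n - 2 * k) * shifted_prod x s q k)"

lemma sum_atMost_eq_if_vanishing:
  fixes f :: "nat \<Rightarrow> 'a :: comm_monoid_add"
  assumes "m \<le> n" and "\<And>k. m < k \<Longrightarrow> f k = 0"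
  shows "(\<Sum>k\<le>n. f k) = (\<Sum>k\<le>m. f k)"
  by (rule sum.mono_neutral_right) (use assms in auto)

lemma x_mult_basis_expansion:
  assumes c_zero: "\<And>n k. n < 2 * k \<Longrightarrow> c n k = 0"
  shows "x * basis_expansion c x s q (n + 1) =
    (\<Sum>k\<le>n + 2. c (n + 1) k * x ^ (n + 2 - 2 * k) * shifted_prod x s q k)"
proof -
  have times_x: "x * (c (n + 1) k * x ^ (n + 1 - 2 * k) * shifted_prod x s q k) =
      c (n + 1) k * x ^ (n + 2 - 2 * k) * shifted_prod x s q k" for k
    using c_zero[of "n + 1" k] by (cases "2 * k \<le> n + 1") (simp_all add: Suc_diff_le)
  have "x * basis_expansion c x s q (n + 1) =
      (\<Sum>k\<le>n + 1. c (n + 1) k * x ^ (n + 2 - 2 * k) * shifted_prod x s q k)"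
    unfolding basis_expansion_def sum_distrib_left times_x ..
  also have "\<dots> = (\<Sum>k\<le>n + 2. c (n + 1) k * x ^ (n + 2 - 2 * k) * shifted_prod x s q k)"
    by (rule sum_atMost_eq_if_vanishing[symmetric]) (auto intro: c_zero)
  finally show ?thesis .
qed

lemma s_mult_basis_expansion:
  assumes c_zero: "\<And>n k. n < 2 * k \<Longrightarrow> c n k = 0"
  shows "q ^ (n + 1) * s * basis_expansion c x s q n =
    (\<Sum>k\<le>n + 2. ((if k = 0 then 0 else q ^ (n + 2 - 2 * k) * c n (k - 1)) - q ^ (n - 2 * k) * c n k)
      * x ^ (n + 2 - 2 * k) * shifted_prod x s q k)"
proof -
  let ?P = "shifted_prod x s q"
  define g where "g k = (if k = 0 then 0 else q ^ (n + 2 - 2 * k) * c n (k - 1) * x ^ (n + 2 - 2 * k) * ?P k)" for k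
  have split: "q ^ (n + 1) * s * (c n k * x ^ (n - 2 * k) * ?P k) =
      g (Suc k) - q ^ (n - 2 * k) * c n k * x ^ (n + 2 - 2 * k) * ?P k" for k
  proof (cases "2 * k \<le> n")
    case True
    \<comment> \<open>The factor x^2 + q^(2k+1) s gained by P (Suc k) splits q^(n+1) s times a basis term into two.\<close>
    have "n + 2 - 2 * k = (n - 2 * k) + 2" "n + 1 = (n - 2 * k) + (2 * k + 1)"
      using True by simp_all
    then have powers: "x ^ (n + 2 - 2 * k) = x ^ (n - 2 * k) * x\<^sup>2"
        "q ^ (n + 1) = q ^ (n - 2 * k) * q ^ (2 * k + 1)"
      by (metis power_add)+
    show ?thesis
      unfolding g_def powers shifted_prod_def prod.lessThan_Suc by simp algebra
  qed (simp add: c_zero g_def)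
  have "c n (Suc n) = 0"
    by (rule c_zero) simp
  then have "(\<Sum>k\<le>n. g (Suc k)) = (\<Sum>k\<le>n + 1. g (Suc k))"
    unfolding Suc_eq_plus1[symmetric] sum.atMost_Suc by (simp add: g_def)
  also have "\<dots> = (\<Sum>k\<le>n + 2. g k)"
    using sum.atMost_Suc_shift[of g "n + 1"] by (simp add: g_def)
  finally have "q ^ (n + 1) * s * basis_expansion c x s q n =
      (\<Sum>k\<le>n + 2. g k) - (\<Sum>k\<le>n. q ^ (n - 2 * k) * c n k * x ^ (n + 2 - 2 * k) * ?P k)"
    unfolding basis_expansion_def sum_distrib_left split sum_subtractf by simp
  also have "(\<Sum>k\<le>n. q ^ (n - 2 * k) * c n k * x ^ (n + 2 - 2 * k) * ?P k) =
      (\<Sum>k\<le>n + 2. q ^ (n - 2 * k) * c n k * x ^ (n + 2 - 2 * k) * ?P k)"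
    by (rule sum_atMost_eq_if_vanishing[symmetric]) (auto intro: c_zero)
  also have "(\<Sum>k\<le>n + 2. g k) - \<dots> =
      (\<Sum>k\<le>n + 2. ((if k = 0 then 0 else q ^ (n + 2 - 2 * k) * c n (k - 1)) - q ^ (n - 2 * k) * c n k)
        * x ^ (n + 2 - 2 * k) * ?P k)"
    unfolding g_def sum_subtractf[symmetric] by (intro sum.cong) (auto simp: algebra_simps)
  finally show ?thesis .
qed

lemma basis_expansion_rec:
  fixes c :: "nat \<Rightarrow> nat \<Rightarrow> real"
  assumes c_zero: "\<And>n k. n < 2 * k \<Longrightarrow> c n k = 0"
    and c_rec: "\<And>k. c (n + 2) k = (1 + q ^ (n + e)) * c (n + 1) k
      + (if k = 0 then 0 else q ^ (n + 2 - 2 * k) * c n (k - 1)) - q ^ (n - 2 * k) * c n k"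
  shows "basis_expansion c x s q (n + 2) =
    (1 + q ^ (n + e)) * x * basis_expansion c x s q (n + 1) + q ^ (n + 1) * s * basis_expansion c x s q n"
proof -
  have "basis_expansion c x s q (n + 2) =
      (1 + q ^ (n + e)) * (\<Sum>k\<le>n + 2. c (n + 1) k * x ^ (n + 2 - 2 * k) * shifted_prod x s q k)
      + (\<Sum>k\<le>n + 2. ((if k = 0 then 0 else q ^ (n + 2 - 2 * k) * c n (k - 1)) - q ^ (n - 2 * k) * c n k)
        * x ^ (n + 2 - 2 * k) * shifted_prod x s q k)"
    unfolding basis_expansion_def c_rec sum_distrib_left sum.distrib[symmetric]
    by (intro sum.cong) (auto simp: algebra_simps)
  also have "\<dots> = (1 + q ^ (n + e)) * (x * basis_expansion c x s q (n + 1))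
      + q ^ (n + 1) * s * basis_expansion c x s q n"
    by (simp only: x_mult_basis_expansion[OF c_zero] s_mult_basis_expansion[OF c_zero])
  finally show ?thesis
    by (simp only: mult.assoc)
qed

lemma eq_basis_expansion_if_rec:
  fixes V :: "nat \<Rightarrow> real" and c :: "nat \<Rightarrow> nat \<Rightarrow> real"
  assumes c_zero: "\<And>n k. n < 2 * k \<Longrightarrow> c n k = 0"
    and c_rec: "\<And>n k. c (n + 2) k = (1 + q ^ (n + e)) * c (n + 1) k
      + (if k = 0 then 0 else q ^ (n + 2 - 2 * k) * c n (k - 1)) - q ^ (n - 2 * k) * c n k"
    and V_0: "V 0 = c 0 0" and V_1: "V 1 = c 1 0 * x"
    and V_rec: "\<And>n. V (n + 2) = (1 + q ^ (n + e)) * x * V (n + 1) + q ^ (n + 1) * s * V n"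
  shows "V n = basis_expansion c x s q n"
proof (induction n rule: less_induct)
  case (less n)
  consider "n = 0" | "n = 1" | m where "n = m + 2"
    by (metis One_nat_def add_2_eq_Suc' not0_implies_Suc)
  then show ?case
  proof cases
    case 1
    then show ?thesis
      by (simp add: V_0 basis_expansion_def shifted_prod_def)
  next
    case 2
    then show ?thesis
      using c_zero[of 1 1] V_1 by (simp add: basis_expansion_def shifted_prod_def)
  next
    case 3
    then have "V n = (1 + q ^ (m + e)) * x * V (m + 1) + q ^ (m + 1) * s * V m"
      by (simp only: V_rec)
    also have "\<dots> = basis_expansion c x s q n"
      using less 3 basis_expansion_rec[where n = m, OF c_zero c_rec] by simp
    finally show ?thesis .
  qed
qed

text \<open>The coefficients of T_n are cheb_coeff 0 and those of U_n are cheb_coeff 1.\<close>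

definition cheb_coeff :: "nat \<Rightarrow> real \<Rightarrow> nat \<Rightarrow> nat \<Rightarrow> real" where
  "cheb_coeff d q n k =
    (if 2 * k \<le> n then q ^ ((n - 2 * k) choose 2) * qbinom q (n + d) (2 * k + d) else 0)"

lemma cheb_coeff_rec_0:
  assumes "q \<noteq> -1" and "d \<le> 1"
  shows "cheb_coeff d q (n + 2) 0 = (1 + q ^ (n + (d + 1))) * cheb_coeff d q (n + 1) 0 - q ^ n * cheb_coeff d q n 0"
proof -
  define Z where "Z = q ^ (n choose 2)"
  have "(n + 1) choose 2 = (n choose 2) + n" "(n + 2) choose 2 = (n choose 2) + n + n + 1"
    using Suc_choose_two[of n] Suc_choose_two[of "Suc n"] by simp_all
  then have powers: "q ^ ((n + 1) choose 2) = Z * q ^ n" "q ^ ((n + 2) choose 2) = Z * q ^ n * q ^ (n + 1)"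
    by (simp_all add: Z_def power_add)
  have at_0: "cheb_coeff d q m 0 = q ^ (m choose 2) * qbinom q (m + d) d" for m
    by (simp add: cheb_coeff_def)
  from assms(2) consider "d = 0" | "d = 1"
    by linarith
  then show ?thesis
  proof cases
    case 1
    then show ?thesis
      unfolding at_0 powers Z_def[symmetric] using qbinom_0[OF assms(1)] by (simp add: algebra_simps)
  next
    case 2
    have coeffs: "cheb_coeff d q (n + 2) 0 = Z * q ^ n * (q ^ (n + 1) * qint q (n + 3))"
      "cheb_coeff d q (n + 1) 0 = Z * q ^ n * qint q (n + 2)" "cheb_coeff d q n 0 = Z * qint q (n + 1)"
      unfolding at_0 powers Z_def[symmetric] using 2 qbinom_1[OF assms(1)]
      by (simp_all add: eval_nat_numeral)
    have recurrence: "q ^ (n + 1) * qint q (n + 3) = (1 + q ^ (n + 2)) * qint q (n + 2) - qint q (n + 1)"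
      using qint_recurrence[of q "n + 1"] by (simp add: eval_nat_numeral)
    show ?thesis
      unfolding coeffs recurrence by (simp add: 2 algebra_simps)
  qed
qed

lemma cheb_coeff_rec:
  assumes q: "q \<noteq> -1" and "d \<le> 1"
  shows "cheb_coeff d q (n + 2) k = (1 + q ^ (n + (d + 1))) * cheb_coeff d q (n + 1) k
    + (if k = 0 then 0 else q ^ (n + 2 - 2 * k) * cheb_coeff d q n (k - 1)) - q ^ (n - 2 * k) * cheb_coeff d q n k"
proof (cases k)
  case 0
  then show ?thesis
    using cheb_coeff_rec_0[OF assms] by simp
next
  case (Suc j)
  consider "n + 2 < 2 * k" | "n + 2 = 2 * k" | "n + 1 = 2 * k" | "2 * k \<le> n"
    by linarith
  then show ?thesis
  proof cases
    case 1
    then show ?thesis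
      using Suc by (simp add: cheb_coeff_def)
  next
    case 2
    then show ?thesis
      using Suc by (simp add: cheb_coeff_def qbinom_self[OF q])
  next
    case 3
    then have "qbinom q (n + 2 + d) (2 * k + d) = qint q (n + 2 + d)"
      "qbinom q (n + d) (2 * (k - 1) + d) = qint q (n + d)"
      using Suc qbinom_Suc_self[OF q, of "n + 1 + d"] qbinom_Suc_self[OF q, of "n - 1 + d"] by simp_all
    moreover have "qint q (n + 2 + d) = 1 + q ^ (n + 1 + d) + q * qint q (n + d)"
      using qint_Suc_left[of q "n + 1 + d"] qint_Suc[of q "n + d"] by (simp add: algebra_simps)
    ultimately show ?thesis
      using 3 Suc by (simp add: cheb_coeff_def qbinom_self[OF q] binomial_eq_0 algebra_simps)
  next
    case 4
    define m p where "m = n - 2 * k" and "p = 2 * j + d"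
    have n: "n = m + 2 * j + 2"
      using 4 Suc by (simp add: m_def)
    have coeffs: "cheb_coeff d q (n + 2) k = q ^ ((m + 2) choose 2) * qbinom q (m + p + 4) (p + 2)"
      "cheb_coeff d q (n + 1) k = q ^ ((m + 1) choose 2) * qbinom q (m + p + 3) (p + 2)"
      "cheb_coeff d q n (k - 1) = q ^ ((m + 2) choose 2) * qbinom q (m + p + 2) p"
      "cheb_coeff d q n k = q ^ (m choose 2) * qbinom q (m + p + 2) (p + 2)"
      unfolding cheb_coeff_def n Suc p_def by (simp_all add: eval_nat_numeral algebra_simps)
    have exponents: "n + (d + 1) = m + p + 3" "n + 2 - 2 * k = m + 2" "n - 2 * k = m"
      using n Suc by (simp_all add: p_def)
    show ?thesis
      unfolding coeffs exponents qbinom_three_term[OF q, of m p] using Suc by (simp add: algebra_simps)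
  qed
qed

lemma basis_expansion_cheb_coeff:
  "basis_expansion (cheb_coeff d q) x s q n =
    (\<Sum>k\<in>{0..n div 2}. q ^ ((n - 2 * k) choose 2) * qbinom q (n + d) (2 * k + d)
      * x ^ (n - 2 * k) * (\<Prod>j\<in>{0..<k}. x\<^sup>2 + q ^ (2 * j + 1) * s))"
proof -
  have "basis_expansion (cheb_coeff d q) x s q n =
      (\<Sum>k\<in>{0..n div 2}. cheb_coeff d q n k * x ^ (n - 2 * k) * shifted_prod x s q k)"
    unfolding basis_expansion_def
    by (rule sum.mono_neutral_right) (auto simp: cheb_coeff_def)
  also have "\<dots> = (\<Sum>k\<in>{0..n div 2}. q ^ ((n - 2 * k) choose 2) * qbinom q (n + d) (2 * k + d)
      * x ^ (n - 2 * k) * (\<Prod>j\<in>{0..<k}. x\<^sup>2 + q ^ (2 * j + 1) * s))"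
    by (intro sum.cong) (auto simp: cheb_coeff_def shifted_prod_def atLeast0LessThan)
  finally show ?thesis .
qed

lemma cheb_expansion:
  fixes V :: "nat \<Rightarrow> real"
  assumes q: "q \<noteq> -1" and d: "d \<le> 1"
    and V_0: "V 0 = 1" and V_1: "V 1 = qint q (d + 1) * x"
    and V_rec: "\<And>n. V (n + 2) = (1 + q ^ (n + (d + 1))) * x * V (n + 1) + q ^ (n + 1) * s * V n"
  shows "V n = (\<Sum>k\<in>{0..n div 2}. q ^ ((n - 2 * k) choose 2) * qbinom q (n + d) (2 * k + d)
      * x ^ (n - 2 * k) * (\<Prod>j\<in>{0..<k}. x\<^sup>2 + q ^ (2 * j + 1) * s))"
proof -
  have "V n = basis_expansion (cheb_coeff d q) x s q n"
  proof (rule eq_basis_expansion_if_rec[where e = "d + 1"])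
    show "cheb_coeff d q n k = 0" if "n < 2 * k" for n k
      using that by (simp add: cheb_coeff_def)
    show "V 0 = cheb_coeff d q 0 0" "V 1 = cheb_coeff d q 1 0 * x"
      using V_0 V_1 qbinom_self[OF q, of d] qbinom_Suc_self[OF q, of d] by (simp_all add: cheb_coeff_def binomial_eq_0)
  qed (use cheb_coeff_rec[OF q d] V_rec in auto)
  then show ?thesis
    unfolding basis_expansion_cheb_coeff .
qed

theorem theorem2p7:
  fixes x s q :: real and n :: nat
  assumes "q \<noteq> -1"
  shows "(T n x s q = (\<Sum>k\<in>{0..n div 2}. q ^ ((n - 2*k) choose 2) * qbinom q n (2*k)
            * x ^ (n - 2*k) * (\<Prod>j\<in>{0..<k}. x\<^sup>2 + q ^ (2*j+1) * s))) \<and>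
         (U n x s q = (\<Sum>k\<in>{0..n div 2}. q ^ ((n - 2*k) choose 2) * qbinom q (n+1) (2*k+1)
            * x ^ (n - 2*k) * (\<Prod>j\<in>{0..<k}. x\<^sup>2 + q ^ (2*j+1) * s)))"
proof
  show "T n x s q = (\<Sum>k\<in>{0..n div 2}. q ^ ((n - 2*k) choose 2) * qbinom q n (2*k)
            * x ^ (n - 2*k) * (\<Prod>j\<in>{0..<k}. x\<^sup>2 + q ^ (2*j+1) * s))"
    using cheb_expansion[OF assms, of 0 "\<lambda>n. T n x s q"] by simp
  show "U n x s q = (\<Sum>k\<in>{0..n div 2}. q ^ ((n - 2*k) choose 2) * qbinom q (n+1) (2*k+1)
            * x ^ (n - 2*k) * (\<Prod>j\<in>{0..<k}. x\<^sup>2 + q ^ (2*j+1) * s))"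
    using cheb_expansion[OF assms, of 1 "\<lambda>n. U n x s q"] by (simp add: qint_def)
qed

end
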